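(* Let $G=(V,E)$ be a graph and $X \subseteq V$ a set of vertices such that every vertex of $V \setminus X$ has degree at most $2$ in $G$. For all positive integers $\ell, p$: if there exists a set $S \subseteq V$ with $|S| \le p$ such that every connected component of $G - S$ has at most $\ell$ vertices, then there exists such a set $S$ (with $|S| \le p$ and all components of $G-S$ of size at most $\ell$) which additionally satisfies: for every cycle $C$ of $G$ with $C \cap X \neq \emptyset$, either $C \cap S = \emptyset$ or $C \cap X \cap S \neq \emptyset$.
   Context: Graphs are finite, simple and undirected; a cycle $C$ is identified with its vertex set when intersecting with vertex sets. *)

theory Defs
  imports Main
begin

definition simple_graph :: "'a set \<Rightarrow> 'a set set \<Rightarrow> bool" where
  "simple_graph V E \<longleftrightarrow> finite V \<and> (\<forall>e\<in>E. \<exists>u v. e = {u, v} \<and> u \<noteq> v \<and> u \<in> V \<and> v \<in> V)"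

definition degree :: "'a set set \<Rightarrow> 'a \<Rightarrow> nat" where
  "degree E v = card {e \<in> E. v \<in> e}"

definition adj_in :: "'a set set \<Rightarrow> 'a set \<Rightarrow> 'a \<Rightarrow> 'a \<Rightarrow> bool" where
  "adj_in E W u v \<longleftrightarrow> u \<in> W \<and> v \<in> W \<and> {u, v} \<in> E"

definition component :: "'a set set \<Rightarrow> 'a set \<Rightarrow> 'a \<Rightarrow> 'a set" where
  "component E W v = {u \<in> W. (adj_in E W)\<^sup>*\<^sup>* v u}"

definition small_components :: "'a set \<Rightarrow> 'a set set \<Rightarrow> 'a set \<Rightarrow> nat \<Rightarrow> bool" where
  "small_components V E S l \<longleftrightarrow> (\<forall>v \<in> V - S. card (component E (V - S) v) \<le> l)"

definition is_cycle :: "'a set \<Rightarrow> 'a set set \<Rightarrow> 'a list \<Rightarrow> bool" where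
  "is_cycle V E cs \<longleftrightarrow> length cs \<ge> 3 \<and> distinct cs \<and> set cs \<subseteq> V \<and>
     (\<forall>i < length cs. {cs ! i, cs ! ((i + 1) mod length cs)} \<in> E)"

end

theory Submission
  imports Defs
begin

text \<open>Among the sets S with |S| \<le> p for which every component of G - S has at most l
  vertices, take one with as few vertices outside X as possible. Suppose a cycle C
  meets X and S, but no vertex of S on C lies in X. Let d be the least distance, walking
  forward along C, from a vertex of S to a vertex of X, and rotate the vertices of S on C
  forward by d positions. Vertices of C outside X have degree 2, so their only edges are
  edges of C, which the backward rotation maps to edges of C; every vertex of C in X is
  joined to its preimage by an arc of length d that avoids S, by the choice of d. Hence the
  backward rotation maps each component of G - S' injectively into a component of G - S.
  The rotated set has the same size and strictly more vertices in X, contradicting the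
  choice of S.\<close>

lemma simple_graph_finite_edges:
  assumes "simple_graph V E"
  shows "finite E"
proof -
  have "E \<subseteq> Pow V" and "finite V"
    using assms unfolding simple_graph_def by auto
  then show ?thesis
    by (meson finite_Pow_iff finite_subset)
qed

lemma is_cycle_length: "is_cycle V E cs \<Longrightarrow> 3 \<le> length cs"
  by (simp add: is_cycle_def)

lemma is_cycle_edge:
  "is_cycle V E cs \<Longrightarrow> i < length cs \<Longrightarrow> {cs ! i, cs ! ((i + 1) mod length cs)} \<in> E"
  by (simp add: is_cycle_def)

lemma symp_adj_in: "symp (adj_in E W)"
  by (auto simp: symp_def adj_in_def insert_commute)

lemma small_components_transfer:
  assumes "finite V" and small: "small_components V E S l"
    and inj: "inj_on f (V - T)" and into: "f ` (V - T) \<subseteq> V - S"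
    and edges: "\<And>u w. adj_in E (V - T) u w \<Longrightarrow> (adj_in E (V - S))\<^sup>*\<^sup>* (f u) (f w)"
  shows "small_components V E T l"
  unfolding small_components_def
proof
  fix v assume v: "v \<in> V - T"
  have "f ` component E (V - T) v \<subseteq> component E (V - S) (f v)"
  proof
    fix y assume "y \<in> f ` component E (V - T) v"
    then obtain u where u: "u \<in> V - T" "(adj_in E (V - T))\<^sup>*\<^sup>* v u" and y: "y = f u"
      unfolding component_def by auto
    from u(2) have "(adj_in E (V - S))\<^sup>*\<^sup>* (f v) (f u)"
      by (induction rule: rtranclp_induct) (auto intro: rtranclp_trans edges)
    then show "y \<in> component E (V - S) (f v)"
      using u(1) y into unfolding component_def by auto
  qed
  moreover have "inj_on f (component E (V - T) v)"
    using inj by (rule inj_on_subset) (auto simp: component_def)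
  moreover have "finite (component E (V - S) (f v))"
    using \<open>finite V\<close> unfolding component_def by simp
  ultimately have "card (component E (V - T) v) \<le> card (component E (V - S) (f v))"
    by (metis card_image card_mono)
  also have "\<dots> \<le> l"
    using small v into unfolding small_components_def by auto
  finally show "card (component E (V - T) v) \<le> l" .
qed

lemma cycle_arc_rtranclp:
  assumes "is_cycle V E cs" and "\<forall>j \<le> k. cs ! ((i + j) mod length cs) \<in> W"
  shows "(adj_in E W)\<^sup>*\<^sup>* (cs ! (i mod length cs)) (cs ! ((i + k) mod length cs))"
  using assms(2)
proof (induction k)
  case 0
  then show ?case by simp
next
  case (Suc k)
  let ?n = "length cs"
  have "0 < ?n"
    using is_cycle_length[OF assms(1)] by linarith
  then have "(i + k) mod ?n < ?n"
    by simp
  then have "{cs ! ((i + k) mod ?n), cs ! (((i + k) mod ?n + 1) mod ?n)} \<in> E"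
    by (rule is_cycle_edge[OF assms(1)])
  then have "adj_in E W (cs ! ((i + k) mod ?n)) (cs ! ((i + Suc k) mod ?n))"
    using Suc.prems[rule_format, of k] Suc.prems[rule_format, of "Suc k"]
    unfolding adj_in_def by (simp add: mod_Suc_eq)
  with Suc show ?case
    by (meson le_SucI order_refl rtranclp.rtrancl_into_rtrancl)
qed

lemma cycle_edge_if_degree_le_2:
  assumes cyc: "is_cycle V E cs" and "finite E"
    and u: "u \<in> set cs" and deg: "degree E u \<le> 2" and uw: "{u, w} \<in> E"
  shows "\<exists>r < length cs. {u, w} = {cs ! r, cs ! ((r + 1) mod length cs)}"
proof (rule ccontr)
  assume no_cycle_edge: "\<not> ?thesis"
  let ?n = "length cs"
  have n3: "?n \<ge> 3" and dist: "distinct cs"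
    using cyc unfolding is_cycle_def by auto
  then have n0: "0 < ?n"
    by linarith
  obtain q where q: "q < ?n" "u = cs ! q"
    using u by (auto simp: in_set_conv_nth)
  define p where "p = (if q = 0 then ?n - 1 else q - 1)"
  have p: "p < ?n" "(p + 1) mod ?n = q"
    using q by (auto simp: p_def)
  have "(q + 1) mod ?n = (if q + 1 = ?n then 0 else q + 1)"
    using q by auto
  then have "(q + 1) mod ?n \<noteq> p"
    using n3 by (auto simp: p_def)
  then have next_ne_prev: "cs ! ((q + 1) mod ?n) \<noteq> cs ! p"
    using dist p(1) n0 by (simp add: nth_eq_iff_index_eq)
  let ?e1 = "{cs ! q, cs ! ((q + 1) mod ?n)}" and ?e2 = "{cs ! p, cs ! ((p + 1) mod ?n)}"
  have "?e1 \<noteq> ?e2"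
    using next_ne_prev p(2) by (auto simp: doubleton_eq_iff)
  moreover have "{u, w} \<noteq> ?e1" "{u, w} \<noteq> ?e2"
    using no_cycle_edge q(1) p(1) by blast+
  ultimately have "card {?e1, ?e2, {u, w}} = 3"
    by (simp add: card_insert_if)
  moreover have "{?e1, ?e2, {u, w}} \<subseteq> {e \<in> E. u \<in> e}"
    using is_cycle_edge[OF cyc q(1)] is_cycle_edge[OF cyc p(1)] q(2) p(2) uw by auto
  ultimately have "3 \<le> degree E u"
    using \<open>finite E\<close> unfolding degree_def
    by (metis (no_types, lifting) card_mono finite_subset mem_Collect_eq subsetI)
  with deg show False by simp
qed

definition cycle_shift :: "'a list \<Rightarrow> nat \<Rightarrow> 'a \<Rightarrow> 'a" where
  "cycle_shift cs d u =
     (if u \<in> set cs then cs ! ((the_inv_into {..<length cs} ((!) cs) u + d) mod length cs) else u)"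

lemma cycle_shift_nth:
  assumes "distinct cs" and "i < length cs"
  shows "cycle_shift cs d (cs ! i) = cs ! ((i + d) mod length cs)"
proof -
  have "inj_on ((!) cs) {..<length cs}"
    using assms(1) by (simp add: inj_on_nth)
  then show ?thesis
    using assms(2) by (simp add: cycle_shift_def the_inv_into_f_f)
qed

lemma cycle_shift_outside: "u \<notin> set cs \<Longrightarrow> cycle_shift cs d u = u"
  by (simp add: cycle_shift_def)

lemma cycle_shift_closed: "set cs \<subseteq> A \<Longrightarrow> u \<in> A \<Longrightarrow> cycle_shift cs d u \<in> A"
  by (cases "cs = []") (auto simp: cycle_shift_def)

lemma cycle_shift_inverse:
  assumes "distinct cs" and "d \<le> length cs"
  shows "cycle_shift cs (length cs - d) (cycle_shift cs d u) = u"
proof (cases "u \<in> set cs")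
  case True
  let ?n = "length cs"
  obtain i where i: "i < ?n" "u = cs ! i"
    using True by (auto simp: in_set_conv_nth)
  have "((i + d) mod ?n + (?n - d)) mod ?n = (i + d + (?n - d)) mod ?n"
    by (rule mod_add_left_eq)
  also have "i + d + (?n - d) = i + ?n"
    using assms(2) by simp
  finally have "((i + d) mod ?n + (?n - d)) mod ?n = i"
    using i(1) by simp
  moreover have "(i + d) mod ?n < ?n"
    using i(1) by (metis mod_less_divisor gr_zeroI less_nat_zero_code)
  ultimately show ?thesis
    using assms(1) i by (simp add: cycle_shift_nth)
next
  case False
  then show ?thesis
    by (simp add: cycle_shift_outside)
qed

lemma inj_cycle_shift: "distinct cs \<Longrightarrow> d \<le> length cs \<Longrightarrow> inj (cycle_shift cs d)"
  by (metis cycle_shift_inverse injI)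

lemma cycle_shift_edge:
  assumes cyc: "is_cycle V E cs" and "r < length cs"
  shows "{cycle_shift cs d (cs ! r), cycle_shift cs d (cs ! ((r + 1) mod length cs))} \<in> E"
proof -
  let ?n = "length cs"
  have n0: "0 < ?n"
    using is_cycle_length[OF cyc] by linarith
  have "((r + 1) mod ?n + d) mod ?n = ((r + d) mod ?n + 1) mod ?n"
    by (simp add: mod_simps ac_simps)
  then show ?thesis
    using cyc assms(2) n0 is_cycle_edge[OF cyc, of "(r + d) mod ?n"]
    by (simp add: is_cycle_def cycle_shift_nth)
qed

lemma cycle_shift_edge_if_degree_le_2:
  assumes cyc: "is_cycle V E cs" and "finite E"
    and "u \<in> set cs" "degree E u \<le> 2" "{u, w} \<in> E"
  shows "{cycle_shift cs d u, cycle_shift cs d w} \<in> E"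
proof -
  let ?n = "length cs" and ?g = "cycle_shift cs d"
  obtain r where "r < ?n" "{u, w} = {cs ! r, cs ! ((r + 1) mod ?n)}"
    using cycle_edge_if_degree_le_2[OF assms] by blast
  then have "{?g u, ?g w} = {?g (cs ! r), ?g (cs ! ((r + 1) mod ?n))}"
    by (metis image_empty image_insert)
  with cycle_shift_edge[OF cyc \<open>r < ?n\<close>] show ?thesis
    by simp
qed

lemma cycle_shift_back_connected:
  assumes cyc: "is_cycle V E cs" and "d \<le> length cs"
    and gap: "\<forall>i < length cs. cs ! i \<in> S \<longrightarrow> (\<forall>k < d. cs ! ((i + k) mod length cs) \<notin> X)"
    and u: "u \<in> set cs" "u \<in> X" and preimage: "cycle_shift cs (length cs - d) u \<notin> S"
  shows "u \<notin> S" and "(adj_in E (V - S))\<^sup>*\<^sup>* (cycle_shift cs (length cs - d) u) u"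
proof -
  let ?n = "length cs"
  have dist: "distinct cs" and csV: "set cs \<subseteq> V"
    using cyc unfolding is_cycle_def by auto
  have n0: "0 < ?n"
    using is_cycle_length[OF cyc] by linarith
  obtain q where q: "q < ?n" "u = cs ! q"
    using u(1) by (auto simp: in_set_conv_nth)
  define a where "a = (q + (?n - d)) mod ?n"
  have a: "a < ?n" "cycle_shift cs (?n - d) u = cs ! a"
    using n0 q dist unfolding a_def by (simp_all add: cycle_shift_nth)
  have a_d: "(a + d) mod ?n = q"
    using q(1) \<open>d \<le> ?n\<close> unfolding a_def by (simp add: mod_add_left_eq)
  have arc: "cs ! ((a + j) mod ?n) \<in> V - S" if "j \<le> d" for j
  proof -
    have idx: "(a + j) mod ?n < ?n"
      using n0 by simp
    have "cs ! ((a + j) mod ?n) \<notin> S"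
    proof (cases "j = 0")
      case True
      then show ?thesis
        using a preimage by simp
    next
      case False
      have "((a + j) mod ?n + (d - j)) mod ?n = (a + j + (d - j)) mod ?n"
        by (rule mod_add_left_eq)
      also have "\<dots> = q"
        using \<open>j \<le> d\<close> a_d by simp
      moreover have "d - j < d"
        using False \<open>j \<le> d\<close> by simp
      ultimately show ?thesis
        using gap idx u(2) q(2) by metis
    qed
    then show ?thesis
      using csV idx nth_mem by blast
  qed
  show "u \<notin> S"
    using arc[of d] a_d q(2) by simp
  have "(adj_in E (V - S))\<^sup>*\<^sup>* (cs ! (a mod ?n)) (cs ! ((a + d) mod ?n))"
    using arc by (intro cycle_arc_rtranclp[OF cyc]) blast
  then show "(adj_in E (V - S))\<^sup>*\<^sup>* (cycle_shift cs (?n - d) u) u"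
    using a a_d q(2) by simp
qed

lemma small_components_cycle_shift:
  assumes cyc: "is_cycle V E cs" and "finite V" "finite E"
    and deg: "\<forall>v \<in> set cs - X. degree E v \<le> 2"
    and small: "small_components V E S l" and "d \<le> length cs"
    and gap: "\<forall>i < length cs. cs ! i \<in> S \<longrightarrow> (\<forall>k < d. cs ! ((i + k) mod length cs) \<notin> X)"
  shows "small_components V E (cycle_shift cs d ` S) l"
proof -
  define S' where "S' = cycle_shift cs d ` S"
  define f where "f = cycle_shift cs (length cs - d)"
  define R where "R = adj_in E (V - S)"
  have dist: "distinct cs" and csV: "set cs \<subseteq> V"
    using cyc unfolding is_cycle_def by auto
  have shift_f: "cycle_shift cs d (f u) = u" for u
    using cycle_shift_inverse[OF dist, of "length cs - d"] \<open>d \<le> length cs\<close>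
    unfolding f_def by simp
  have f_into: "f u \<in> V - S" if "u \<in> V - S'" for u
    using that shift_f[of u] cycle_shift_closed[OF csV]
    unfolding S'_def f_def by (metis Diff_iff image_eqI)
  have anchored: "u \<in> V - S \<and> R\<^sup>*\<^sup>* (f u) u" if u: "u \<in> V - S'" "u \<notin> set cs - X" for u
  proof (cases "u \<in> set cs")
    case False
    then show ?thesis
      using f_into[OF u(1)] by (simp add: f_def cycle_shift_outside)
  next
    case True
    then show ?thesis
      using cycle_shift_back_connected[OF cyc \<open>d \<le> length cs\<close> gap True] f_into[OF u(1)] u
      unfolding R_def f_def by auto
  qed
  have cycle_edge: "R (f u) (f w)"
    if "u \<in> set cs - X" and uw: "{u, w} \<in> E" "u \<in> V - S'" "w \<in> V - S'" for u w
    using cycle_shift_edge_if_degree_le_2[OF cyc \<open>finite E\<close>] f_into deg that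
    unfolding R_def adj_in_def f_def by simp
  have edges: "R\<^sup>*\<^sup>* (f u) (f w)" if "adj_in E (V - S') u w" for u w
  proof -
    have uw: "u \<in> V - S'" "w \<in> V - S'" "{u, w} \<in> E" "{w, u} \<in> E"
      using that unfolding adj_in_def by (auto simp: insert_commute)
    have sym: "symp R\<^sup>*\<^sup>*"
      unfolding R_def by (intro symp_rtranclp symp_adj_in)
    consider "u \<in> set cs - X" | "w \<in> set cs - X" | "u \<notin> set cs - X" "w \<notin> set cs - X"
      by blast
    then show ?thesis
    proof cases
      case 1
      then show ?thesis
        using cycle_edge[of u w] uw by blast
    next
      case 2
      then show ?thesis
        using cycle_edge[of w u] uw sym by (meson r_into_rtranclp sympD)
    next
      case 3
      then have "u \<in> V - S" "w \<in> V - S" "R\<^sup>*\<^sup>* (f u) u" "R\<^sup>*\<^sup>* (f w) w"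
        using anchored uw by auto
      moreover have "R\<^sup>*\<^sup>* w (f w)"
        using sym \<open>R\<^sup>*\<^sup>* (f w) w\<close> by (rule sympD)
      moreover have "R u w"
        using \<open>u \<in> V - S\<close> \<open>w \<in> V - S\<close> uw(3) unfolding R_def adj_in_def by simp
      ultimately show ?thesis
        by (meson converse_rtranclp_into_rtranclp rtranclp_trans)
    qed
  qed
  have "inj_on f (V - S')"
    by (metis shift_f inj_onI)
  moreover have "f ` (V - S') \<subseteq> V - S"
    using f_into by blast
  ultimately show ?thesis
    using small_components_transfer[OF \<open>finite V\<close> small] edges unfolding S'_def R_def by blast
qed

lemma cycle_least_gap:
  assumes "i < length cs" "cs ! i \<in> S" "j < length cs" "cs ! j \<in> X"
  obtains d i' where "d < length cs" "i' < length cs" "cs ! i' \<in> S"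
    "cs ! ((i' + d) mod length cs) \<in> X"
    "\<forall>i < length cs. cs ! i \<in> S \<longrightarrow> (\<forall>k < d. cs ! ((i + k) mod length cs) \<notin> X)"
proof -
  let ?n = "length cs"
  have n0: "0 < ?n"
    using assms(1) by linarith
  define reaches where "reaches k \<longleftrightarrow> (\<exists>i < ?n. cs ! i \<in> S \<and> cs ! ((i + k) mod ?n) \<in> X)" for k
  have "(i + (j + ?n - i) mod ?n) mod ?n = j"
    using assms(1,3) by (simp add: mod_add_right_eq)
  then have "reaches ((j + ?n - i) mod ?n)"
    using assms unfolding reaches_def by auto
  moreover obtain d where d: "reaches d" "\<forall>k < d. \<not> reaches k"
    using exists_least_iff[of reaches] calculation by blast
  ultimately have "d \<le> (j + ?n - i) mod ?n"
    using not_le by blast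
  also have "(j + ?n - i) mod ?n < ?n"
    using n0 by simp
  finally have "d < ?n" .
  from d(1) obtain i' where "i' < ?n" "cs ! i' \<in> S" "cs ! ((i' + d) mod ?n) \<in> X"
    unfolding reaches_def by blast
  with \<open>d < ?n\<close> d(2) show ?thesis
    using that unfolding reaches_def by blast
qed

lemma card_cycle_shift_diff_less:
  assumes "finite S" "distinct cs" "d \<le> length cs" and disj: "set cs \<inter> X \<inter> S = {}"
    and i: "i < length cs" "cs ! i \<in> S" "cs ! ((i + d) mod length cs) \<in> X"
  shows "card (cycle_shift cs d ` S - X) < card (S - X)"
proof -
  let ?g = "cycle_shift cs d"
  have "card (?g ` S) = card S"
    using inj_cycle_shift[OF assms(2,3)] by (simp add: card_image inj_on_subset)
  moreover have "S \<inter> X \<subset> ?g ` S \<inter> X"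
  proof
    show "S \<inter> X \<subseteq> ?g ` S \<inter> X"
    proof
      fix u assume u: "u \<in> S \<inter> X"
      then have "?g u = u"
        using disj by (intro cycle_shift_outside) blast
      then show "u \<in> ?g ` S \<inter> X"
        using u by (metis IntE IntI image_eqI)
    qed
    have new: "?g (cs ! i) \<in> X"
      using cycle_shift_nth[OF assms(2) i(1)] i(3) by simp
    moreover have "?g (cs ! i) \<in> set cs"
      using i(1) by (simp add: cycle_shift_closed)
    ultimately have "?g (cs ! i) \<notin> S"
      using disj by blast
    with new show "S \<inter> X \<noteq> ?g ` S \<inter> X"
      using i(2) by blast
  qed
  then have "card (S \<inter> X) < card (?g ` S \<inter> X)"
    using \<open>finite S\<close> by (simp add: psubset_card_mono)
  moreover have "card (?g ` S \<inter> X) \<le> card (?g ` S)"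
    using \<open>finite S\<close> by (simp add: card_mono)
  ultimately show ?thesis
    using \<open>finite S\<close> by (simp add: card_Diff_subset_Int)
qed

lemma exchange_separator_along_cycle:
  assumes sg: "simple_graph V E" and deg: "\<forall>v \<in> V - X. degree E v \<le> 2"
    and S: "S \<subseteq> V" "small_components V E S l"
    and cyc: "is_cycle V E cs" and meets: "set cs \<inter> X \<noteq> {}" "set cs \<inter> S \<noteq> {}"
    and disj: "set cs \<inter> X \<inter> S = {}"
  obtains S' where "S' \<subseteq> V" "card S' = card S" "small_components V E S' l"
    "card (S' - X) < card (S - X)"
proof -
  have "finite V" "finite E"
    using sg simple_graph_finite_edges unfolding simple_graph_def by auto
  have dist: "distinct cs" and csV: "set cs \<subseteq> V"
    using cyc unfolding is_cycle_def by auto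
  obtain i j where "i < length cs" "cs ! i \<in> S" "j < length cs" "cs ! j \<in> X"
    using meets by (auto simp: in_set_conv_nth)
  then obtain d i' where d: "d < length cs" "i' < length cs" "cs ! i' \<in> S"
    "cs ! ((i' + d) mod length cs) \<in> X"
    and gap: "\<forall>i < length cs. cs ! i \<in> S \<longrightarrow> (\<forall>k < d. cs ! ((i + k) mod length cs) \<notin> X)"
    by (rule cycle_least_gap)
  show ?thesis
  proof (rule that)
    show "cycle_shift cs d ` S \<subseteq> V"
      using S(1) cycle_shift_closed[OF csV] by blast
    show "card (cycle_shift cs d ` S) = card S"
      using inj_cycle_shift[OF dist, of d] d(1) by (metis card_image inj_on_subset less_imp_le subset_UNIV)
    show "small_components V E (cycle_shift cs d ` S) l"
      using small_components_cycle_shift[OF cyc \<open>finite V\<close> \<open>finite E\<close> _ S(2) _ gap] deg csV d(1)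
      by auto
    show "card (cycle_shift cs d ` S - X) < card (S - X)"
      using card_cycle_shift_diff_less[OF _ dist _ disj d(2-4)] \<open>finite V\<close> S(1) d(1)
      by (simp add: finite_subset)
  qed
qed

theorem lemma9:
  fixes V :: "'a set" and E :: "'a set set" and X :: "'a set" and l p :: nat
  assumes "simple_graph V E"
    and "X \<subseteq> V"
    and "\<forall>v \<in> V - X. degree E v \<le> 2"
    and "l \<ge> 1" and "p \<ge> 1"
    and "\<exists>S. S \<subseteq> V \<and> card S \<le> p \<and> small_components V E S l"
  shows "\<exists>S. S \<subseteq> V \<and> card S \<le> p \<and> small_components V E S l \<and>
           (\<forall>cs. is_cycle V E cs \<and> set cs \<inter> X \<noteq> {} \<longrightarrow>
                 set cs \<inter> S = {} \<or> set cs \<inter> X \<inter> S \<noteq> {})"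
proof -
  let ?valid = "\<lambda>S. S \<subseteq> V \<and> card S \<le> p \<and> small_components V E S l"
  obtain S where S: "?valid S" and min: "\<And>T. ?valid T \<Longrightarrow> card (S - X) \<le> card (T - X)"
    using ex_has_least_nat[of ?valid _ "\<lambda>S. card (S - X)"] assms(6) by metis
  have "set cs \<inter> S = {} \<or> set cs \<inter> X \<inter> S \<noteq> {}"
    if cyc: "is_cycle V E cs" "set cs \<inter> X \<noteq> {}" for cs
  proof (rule ccontr)
    assume "\<not> ?thesis"
    then obtain S' where S': "S' \<subseteq> V" "card S' = card S" "small_components V E S' l"
      "card (S' - X) < card (S - X)"
      using exchange_separator_along_cycle[OF assms(1,3) _ _ cyc] S by blast
    then have "card (S - X) \<le> card (S' - X)"
      using min S by simp
    with S'(4) show False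
      by simp
  qed
  with S show ?thesis
    by blast
qed

end
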